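(* Set $L = (N -1)(r-1) + 1$. The following formula holds in $E_{n,m}(L)$: \begin{equation*} \sum_{0 \le k_1 \le L}\cdots \sum_{0 \le k_m \le L}(-1)^{k_1 + \cdots + k_m} \begin{bmatrix} L \\ k_1 \end{bmatrix} \cdots \begin{bmatrix} L \\ k_m \end{bmatrix}(\mathbf{k}, \mathbf 0, \cdots, \mathbf 0, \mathbf{k}') = 0, \end{equation*} where $\mathbf{k} = {}^t(k_1, \dots, k_m)$ and $\mathbf{k}' = {}^t(L - k_1, \dots, L - k_m)$ are column vectors, so $(\mathbf{k}, \mathbf 0, \dots, \mathbf 0, \mathbf{k}')$ is the $m \times n$ matrix with first column $\mathbf{k}$, last column $\mathbf{k}'$ and all other columns zero.
   Context: Let $q$ be an indeterminate, $[n] = \frac{q^n - q^{-n}}{q - q^{-1}}$, $\begin{bmatrix} n \\ m\end{bmatrix} = \frac{[n][n-1]\cdots[n-m+1]}{[m]^!}$ ($m\ge1$), $\begin{bmatrix} n \\ 0\end{bmatrix}=1$. Fix integers $r \ge 2$, $m \ge 1$, $n \ge 2$ and $N \le n$, and for each $i \in [1,m]$ a subset $A_i \subset [1, n-1]$ with $|A_i| = N-1$. Let $V_{n,m}$ be the $\mathbb{Q}(q)$-vector space spanned by matrices $\mathbf{a} = (a^{(k)}_i) \in M(m,n)$ with entries in $\mathbb{N}$ (rows $i \in [1,m]$, columns $k \in [1,n]$), subject to the relations: for each entry $a^{(k)}_i$ with $k \le n-1$, $\mathbf{a} = \sum_{1 \le t \le r}(-1)^{t-1}\begin{bmatrix}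 r \\ t\end{bmatrix}\mathbf{a}(t)$ if $k \in A_i$ and $a^{(k)}_i \ge r$, and $\mathbf{a} = \mathbf{a}(1)$ if $k \notin A_i$ and $a^{(k)}_i \ge 1$; here $\mathbf{a}(t)$ is obtained from $\mathbf{a}$ by replacing the $i$-th row by $(a^{(1)}_i, \dots, a^{(k-1)}_i, a^{(k)}_i - t, a^{(k+1)}_i + t, a^{(k+2)}_i, \dots, a^{(n)}_i)$ and keeping the other rows. For $L' \ge 1$, $E_{n,m}(L')$ is the subspace of $V_{n,m}$ spanned by the matrices $\mathbf{a}$ with $\sum_{k=1}^n a^{(k)}_i = L'$ for every $i$ and $a^{(k)}_i \in [0, r-1]$ for $1 \le k < n$. *)

theory Defs
  imports "HOL-Computational_Algebra.Polynomial" "HOL-Computational_Algebra.Fraction_Field" "HOL-Library.Function_Algebras" "HOL-Library.FuncSet"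
begin

type_synonym qfield = "rat poly fract"

definition qvar :: qfield where
  "qvar = Fract [:0, 1:] 1"

definition qint :: "int \<Rightarrow> qfield" where
  "qint n = (qvar powi n - qvar powi (- n)) / (qvar - inverse qvar)"

definition qfact :: "nat \<Rightarrow> qfield" where
  "qfact m = (\<Prod>j = 1..m. qint (int j))"

definition qbinom :: "int \<Rightarrow> nat \<Rightarrow> qfield" where
  "qbinom n m = (if m = 0 then 1 else (\<Prod>j<m. qint (n - int j)) / qfact m)"

text \<open>Matrices a = (a_i^(k)) are functions  i \<mapsto> k \<mapsto> a_i^(k); rows 1..m, columns 1..n;
  entries outside this range are required to be 0.\<close>
type_synonym mat = "nat \<Rightarrow> nat \<Rightarrow> nat"

definition valid_mat :: "nat \<Rightarrow> nat \<Rightarrow> mat \<Rightarrow> bool" where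
  "valid_mat m n a \<longleftrightarrow> (\<forall>i k. (i \<notin> {1..m} \<or> k \<notin> {1..n}) \<longrightarrow> a i k = 0)"

type_synonym comb = "mat \<Rightarrow> qfield"

definition basis_vec :: "mat \<Rightarrow> comb" where
  "basis_vec a = (\<lambda>b. if b = a then 1 else 0)"

definition scale_comb :: "qfield \<Rightarrow> comb \<Rightarrow> comb" where
  "scale_comb c f = (\<lambda>b. c * f b)"

definition shift_mat :: "mat \<Rightarrow> nat \<Rightarrow> nat \<Rightarrow> nat \<Rightarrow> mat" where
  "shift_mat a i k t = a(i := (a i)(k := a i k - t, Suc k := a i (Suc k) + t))"

inductive_set rel_space :: "nat \<Rightarrow> nat \<Rightarrow> nat \<Rightarrow> (nat \<Rightarrow> nat set) \<Rightarrow> comb set"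
  for r m n A where
  zero: "(\<lambda>_. 0) \<in> rel_space r m n A"
| gen_A: "\<lbrakk>valid_mat m n a; i \<in> {1..m}; k \<in> {1..n-1}; k \<in> A i; a i k \<ge> r\<rbrakk> \<Longrightarrow>
     basis_vec a - (\<Sum>t = 1..r. scale_comb ((-1) ^ (t - 1) * qbinom (int r) t)
                                   (basis_vec (shift_mat a i k t))) \<in> rel_space r m n A"
| gen_notA: "\<lbrakk>valid_mat m n a; i \<in> {1..m}; k \<in> {1..n-1}; k \<notin> A i; a i k \<ge> 1\<rbrakk> \<Longrightarrow>
     basis_vec a - basis_vec (shift_mat a i k 1) \<in> rel_space r m n A"
| add: "\<lbrakk>f \<in> rel_space r m n A; g \<in> rel_space r m n A\<rbrakk> \<Longrightarrow> f + g \<in> rel_space r m n A"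
| scale: "f \<in> rel_space r m n A \<Longrightarrow> scale_comb c f \<in> rel_space r m n A"

text \<open>Equality to zero in V_{n,m} = formal combinations modulo rel_space.\<close>
definition zero_in_V :: "nat \<Rightarrow> nat \<Rightarrow> nat \<Rightarrow> (nat \<Rightarrow> nat set) \<Rightarrow> comb \<Rightarrow> bool" where
  "zero_in_V r m n A f \<longleftrightarrow> f \<in> rel_space r m n A"

definition edge_mat :: "nat \<Rightarrow> nat \<Rightarrow> nat \<Rightarrow> (nat \<Rightarrow> nat) \<Rightarrow> mat" where
  "edge_mat m n L kk = (\<lambda>i j. if i \<in> {1..m} then
       (if j = 1 then kk i else if j = n then L - kk i else 0) else 0)"

end

theory Submission
  imports Defs "HOL-Library.Poly_Mapping"
begin

text \<open>Read V_{n,m} as a quotient of the polynomial ring Q(q)[x_i^(k)], a monomial standing for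
  its exponent matrix and monomials outside the m \<times> n range being sent to 0; the kernel is an
  ideal because the defining relations are stable under adding a matrix. Let P_t(x, y) be the
  q-analogue \<Sum>_s (-1)^s [t, s] x^(t-s) y^s of (x - y)^t. The relations of row i say that
  P_r(x_i^(k), x_i^(k+1)) lies in the kernel for k \<in> A_i and x_i^(k) - x_i^(k+1) does for
  k \<notin> A_i. If P_(s+1)(x, y) and P_(u+1)(y, z) lie in an ideal, so does P_(s+u+1)(x, z);
  chaining along row i therefore puts P_L(x_i^(1), x_i^(n)) with L = (N - 1)(r - 1) + 1 into the
  kernel. The sum in the theorem is the expansion of the product over all rows of
  P_L(x_i^(n), x_i^(1)), so it vanishes in V.\<close>

section \<open>Gaussian binomial coefficients\<close>

lemma qvar_power: "qvar ^ j = Fract ([:0, 1:] ^ j) 1"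
  by (induct j) (auto simp: qvar_def One_fract_def)

lemma qvar_nonzero: "qvar \<noteq> 0"
  by (simp add: qvar_def Zero_fract_def eq_fract)

lemma qvar_power_eq_1_iff: "qvar ^ k = 1 \<longleftrightarrow> k = 0"
proof
  assume "qvar ^ k = 1"
  then have "([:0, 1:] :: rat poly) ^ k = 1"
    by (simp add: qvar_power One_fract_def eq_fract)
  then have "degree (([:0, 1:] :: rat poly) ^ k) = 0"
    by simp
  then show "k = 0"
    by (simp add: degree_power_eq)
qed simp

lemma qvar_power_neq_inverse_power: "k \<ge> 1 \<Longrightarrow> qvar ^ k \<noteq> inverse qvar ^ k"
  using qvar_power_eq_1_iff[of "2 * k"] qvar_nonzero
  by (auto simp: power_mult power_inverse field_simps power2_eq_square)

lemma qint_of_nat: "qint (int n) = (qvar ^ n - inverse qvar ^ n) / (qvar - inverse qvar)"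
  by (simp add: qint_def power_int_minus power_inverse)

lemma qint_0: "qint 0 = 0"
  by (simp add: qint_def)

lemma qint_1: "qint 1 = 1"
  using qint_of_nat[of 1] qvar_power_neq_inverse_power[of 1] by simp

lemma qint_nonzero: "n \<ge> 1 \<Longrightarrow> qint (int n) \<noteq> 0"
  using qvar_power_neq_inverse_power[of n] qvar_power_neq_inverse_power[of 1]
  by (simp add: qint_of_nat)

lemma qint_add: "qint (int (a + t)) = inverse qvar ^ t * qint (int a) + qvar ^ a * qint (int t)"
proof -
  have "qvar ^ (a + t) - inverse qvar ^ (a + t)
      = inverse qvar ^ t * (qvar ^ a - inverse qvar ^ a) + qvar ^ a * (qvar ^ t - inverse qvar ^ t)"
    by (simp add: power_add algebra_simps)
  then show ?thesis
    unfolding qint_of_nat by (simp add: add_divide_distrib)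
qed

lemma qfact_Suc: "qfact (Suc k) = qfact k * qint (int (Suc k))"
  by (simp add: qfact_def)

lemma qfact_nonzero: "qfact k \<noteq> 0"
  by (simp add: qfact_def qint_nonzero del: of_nat_Suc)

definition qfalling :: "nat \<Rightarrow> nat \<Rightarrow> qfield" where
  "qfalling n t = (\<Prod>j<t. qint (int n - int j))"

lemma qbinom_eq_qfalling: "qbinom (int n) t = qfalling n t / qfact t"
  by (simp add: qbinom_def qfalling_def qfact_def)

lemma qfalling_Suc: "qfalling n (Suc t) = qfalling n t * qint (int n - int t)"
  by (simp add: qfalling_def)

lemma qfalling_Suc_Suc: "qfalling (Suc n) (Suc t) = qint (int (Suc n)) * qfalling n t"
  unfolding qfalling_def by (subst prod.lessThan_Suc_shift) simp

lemma qfalling_mult_qfact: "t \<le> n \<Longrightarrow> qfalling n t * qfact (n - t) = qfact n"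
proof (induct t)
  case 0
  then show ?case by (simp add: qfalling_def)
next
  case (Suc t)
  have "qfact (n - t) = qfact (n - Suc t) * qint (int n - int t)"
    using Suc.prems qfact_Suc[of "n - Suc t"] by (simp add: Suc_diff_Suc of_nat_diff)
  with Suc show ?case
    by (simp add: qfalling_Suc ac_simps)
qed

lemma qbinom_0 [simp]: "qbinom n 0 = 1"
  by (simp add: qbinom_def)

lemma qbinom_eq_0: "t > n \<Longrightarrow> qbinom (int n) t = 0"
  unfolding qbinom_eq_qfalling qfalling_def
  by (subst prod_zero) (auto intro!: bexI[of _ n] simp: qint_0)

lemma qbinom_eq_qfact: "t \<le> n \<Longrightarrow> qbinom (int n) t = qfact n / (qfact t * qfact (n - t))"
  using qfalling_mult_qfact[of t n] qfact_nonzero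
  by (simp add: qbinom_eq_qfalling field_simps)

lemma qbinom_symmetric: "t \<le> n \<Longrightarrow> qbinom (int n) (n - t) = qbinom (int n) t"
  by (simp add: qbinom_eq_qfact mult.commute)

lemma qbinom_Suc:
  assumes "1 \<le> t" "t \<le> Suc n"
  shows "qbinom (int (Suc n)) t
    = inverse qvar ^ t * qbinom (int n) t + qvar ^ (Suc n - t) * qbinom (int n) (t - 1)"
proof -
  obtain s where t: "t = Suc s"
    using assms by (cases t) auto
  have "qint (int (Suc n)) = qint (int ((Suc n - t) + t))"
    using assms by simp
  also have "\<dots> = inverse qvar ^ t * qint (int (Suc n - t)) + qvar ^ (Suc n - t) * qint (int t)"
    by (rule qint_add)
  finally have split: "qint (int (Suc n)) = \<dots>" .
  have shift: "int n - int s = int (Suc n - t)"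
    using assms t by simp
  have "qbinom (int (Suc n)) t = qint (int (Suc n)) * qfalling n s / qfact t"
    by (simp add: qbinom_eq_qfalling t qfalling_Suc_Suc del: of_nat_Suc)
  also have "\<dots> = inverse qvar ^ t * (qfalling n s * qint (int (Suc n - t))) / qfact t
       + qvar ^ (Suc n - t) * qfalling n s / qfact s"
    using qfact_nonzero[of s] qint_nonzero[of t] assms
    by (simp add: split t qfact_Suc field_simps del: of_nat_Suc)
  also have "\<dots> = inverse qvar ^ t * qbinom (int n) t + qvar ^ (Suc n - t) * qbinom (int n) (t - 1)"
    by (simp add: qbinom_eq_qfalling t qfalling_Suc shift)
  finally show ?thesis .
qed

section \<open>The q-analogue of (x - y)^n\<close>

definition qconst :: "qfield \<Rightarrow> 'b::comm_monoid_add \<Rightarrow>\<^sub>0 qfield" where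
  "qconst c = Poly_Mapping.single 0 c"

lemma qconst_0 [simp]: "qconst 0 = 0"
  and qconst_1 [simp]: "qconst 1 = 1"
  and qconst_diff: "qconst (a - b) = qconst a - qconst b"
  and qconst_mult: "qconst (a * b) = qconst a * qconst b"
  by (simp_all add: qconst_def single_diff mult_single)

lemma qconst_power: "qconst (a ^ k) = qconst a ^ k"
  by (induct k) (simp_all add: qconst_mult)

text \<open>The q-analogue of (x - y)^n; by the recursion qdiff_power_Suc it is the product
  of the factors x - q^(n-1-2j) y for j < n.\<close>
definition qdiff_power :: "nat \<Rightarrow> ('b::comm_monoid_add \<Rightarrow>\<^sub>0 qfield) \<Rightarrow> ('b \<Rightarrow>\<^sub>0 qfield) \<Rightarrow> 'b \<Rightarrow>\<^sub>0 qfield" where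
  "qdiff_power n x y = (\<Sum>t\<le>n. qconst ((-1) ^ t * qbinom (int n) t) * x ^ (n - t) * y ^ t)"

lemma qdiff_power_1 [simp]: "qdiff_power (Suc 0) x y = x - y"
  by (simp add: qdiff_power_def qbinom_def qfact_def qint_1 qconst_def single_uminus)

lemma qdiff_power_scale_right:
  "qdiff_power n x (qconst c * y)
    = (\<Sum>t\<le>n. qconst ((-1) ^ t * qbinom (int n) t * c ^ t) * x ^ (n - t) * y ^ t)"
  unfolding qdiff_power_def
  by (rule sum.cong) (simp_all add: power_mult_distrib qconst_mult qconst_power ac_simps)

lemma qdiff_power_homogeneous:
  "qdiff_power n (qconst c * x) (qconst c * y) = qconst (c ^ n) * qdiff_power n x y"
  unfolding qdiff_power_def sum_distrib_left
proof (rule sum.cong)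
  fix t
  assume "t \<in> {..n}"
  then have "c ^ n = c ^ (n - t) * c ^ t"
    by (simp flip: power_add)
  then show "qconst ((-1) ^ t * qbinom (int n) t) * (qconst c * x) ^ (n - t) * (qconst c * y) ^ t
      = qconst (c ^ n) * (qconst ((-1) ^ t * qbinom (int n) t) * x ^ (n - t) * y ^ t)"
    by (simp add: power_mult_distrib qconst_mult qconst_power ac_simps)
qed simp

lemma qdiff_power_swap: "qdiff_power n y x = qconst ((-1) ^ n) * qdiff_power n x y"
proof -
  have "qdiff_power n y x
      = (\<Sum>t\<le>n. qconst ((-1) ^ (n - t) * qbinom (int n) (n - t)) * y ^ t * x ^ (n - t))"
    unfolding qdiff_power_def
    by (rule sum.reindex_bij_witness[where i="\<lambda>t. n - t" and j="\<lambda>t. n - t"]) auto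
  also have "\<dots> = (\<Sum>t\<le>n. qconst ((-1) ^ n) * (qconst ((-1) ^ t * qbinom (int n) t) * x ^ (n - t) * y ^ t))"
  proof (rule sum.cong)
    fix t
    assume "t \<in> {..n}"
    then have "(-1 :: qfield) ^ (n - t) = (-1) ^ n * (-1) ^ t"
      by (simp add: minus_one_power_iff)
    with \<open>t \<in> {..n}\<close> show "qconst ((-1) ^ (n - t) * qbinom (int n) (n - t)) * y ^ t * x ^ (n - t)
        = qconst ((-1) ^ n) * (qconst ((-1) ^ t * qbinom (int n) t) * x ^ (n - t) * y ^ t)"
      by (simp add: qbinom_symmetric qconst_mult ac_simps)
  qed simp
  finally show ?thesis
    by (simp add: qdiff_power_def sum_distrib_left)
qed

lemma linear_times_binary_form:
  assumes "a (Suc n) = 0"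
  shows "(x - qconst c * y) * (\<Sum>t\<le>n. qconst (a t) * x ^ (n - t) * y ^ t)
    = (\<Sum>t\<le>Suc n. qconst (a t - (if t = 0 then 0 else c * a (t - 1))) * x ^ (Suc n - t) * y ^ t)"
proof -
  have "x * (\<Sum>t\<le>n. qconst (a t) * x ^ (n - t) * y ^ t)
      = (\<Sum>t\<le>n. qconst (a t) * x ^ (Suc n - t) * y ^ t)"
    unfolding sum_distrib_left by (rule sum.cong) (simp_all add: Suc_diff_le ac_simps)
  also have "\<dots> = (\<Sum>t\<le>Suc n. qconst (a t) * x ^ (Suc n - t) * y ^ t)"
    using assms by simp
  finally have left: "x * (\<Sum>t\<le>n. qconst (a t) * x ^ (n - t) * y ^ t) = \<dots>" .
  have "qconst c * y * (\<Sum>t\<le>n. qconst (a t) * x ^ (n - t) * y ^ t)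
      = (\<Sum>t\<le>n. qconst (c * a t) * x ^ (Suc n - Suc t) * y ^ Suc t)"
    unfolding sum_distrib_left by (rule sum.cong) (simp_all add: qconst_mult ac_simps)
  also have "\<dots> = (\<Sum>t\<le>Suc n. qconst (if t = 0 then 0 else c * a (t - 1)) * x ^ (Suc n - t) * y ^ t)"
    by (subst sum.atMost_Suc_shift) simp
  finally have right: "qconst c * y * (\<Sum>t\<le>n. qconst (a t) * x ^ (n - t) * y ^ t) = \<dots>" .
  show ?thesis
    unfolding left_diff_distrib left right sum_subtractf[symmetric] qconst_diff left_diff_distrib ..
qed

lemma qbinom_coeff_Suc:
  assumes "t \<le> Suc n"
  shows "(-1) ^ t * qbinom (int (Suc n)) t
    = (-1) ^ t * qbinom (int n) t * inverse qvar ^ t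
      - (if t = 0 then 0 else qvar ^ n * ((-1) ^ (t - 1) * qbinom (int n) (t - 1) * inverse qvar ^ (t - 1)))"
proof (cases t)
  case (Suc s)
  have "n = s + (Suc n - t)"
    using assms Suc by simp
  then have "inverse qvar ^ s * qvar ^ n = (inverse qvar ^ s * qvar ^ s) * qvar ^ (Suc n - t)"
    by (metis power_add mult.assoc)
  then have "inverse qvar ^ s * qvar ^ n = qvar ^ (Suc n - t)"
    using qvar_nonzero by (simp flip: power_mult_distrib)
  moreover have "qbinom (int (Suc n)) t
      = inverse qvar ^ t * qbinom (int n) t + qvar ^ (Suc n - t) * qbinom (int n) (t - 1)"
    using assms Suc by (intro qbinom_Suc) auto
  ultimately show ?thesis
    using Suc by (simp add: algebra_simps)
qed simp

lemma qdiff_power_Suc: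
  "qdiff_power (Suc n) x y = (x - qconst (qvar ^ n) * y) * qdiff_power n x (qconst (inverse qvar) * y)"
proof -
  define a where "a t = (-1) ^ t * qbinom (int n) t * inverse qvar ^ t" for t
  have "a (Suc n) = 0"
    by (simp add: a_def qbinom_eq_0)
  then have "(x - qconst (qvar ^ n) * y) * qdiff_power n x (qconst (inverse qvar) * y)
      = (\<Sum>t\<le>Suc n. qconst (a t - (if t = 0 then 0 else qvar ^ n * a (t - 1))) * x ^ (Suc n - t) * y ^ t)"
    unfolding qdiff_power_scale_right a_def[symmetric] by (rule linear_times_binary_form)
  also have "\<dots> = qdiff_power (Suc n) x y"
    unfolding qdiff_power_def by (rule sum.cong) (simp_all add: a_def qbinom_coeff_Suc del: of_nat_Suc)
  finally show ?thesis ..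
qed

section \<open>Ideals\<close>

definition is_ideal :: "'a::comm_ring_1 set \<Rightarrow> bool" where
  "is_ideal I \<longleftrightarrow> 0 \<in> I \<and> (\<forall>a\<in>I. \<forall>b\<in>I. a + b \<in> I) \<and> (\<forall>a\<in>I. \<forall>c. c * a \<in> I)"

lemma ideal_zero: "is_ideal I \<Longrightarrow> 0 \<in> I"
  and ideal_add: "is_ideal I \<Longrightarrow> a \<in> I \<Longrightarrow> b \<in> I \<Longrightarrow> a + b \<in> I"
  and ideal_mult_left: "is_ideal I \<Longrightarrow> a \<in> I \<Longrightarrow> c * a \<in> I"
  by (simp_all add: is_ideal_def)

lemma ideal_mult_right: "is_ideal I \<Longrightarrow> a \<in> I \<Longrightarrow> a * c \<in> I"
  by (metis ideal_mult_left mult.commute)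

lemma ideal_diff: "is_ideal I \<Longrightarrow> a \<in> I \<Longrightarrow> b \<in> I \<Longrightarrow> a - b \<in> I"
  using ideal_add[of I a "(-1) * b"] ideal_mult_left[of I b "-1"] by simp

lemma ideal_sum: "is_ideal I \<Longrightarrow> (\<And>t. t \<in> S \<Longrightarrow> f t \<in> I) \<Longrightarrow> sum f S \<in> I"
  by (induct S rule: infinite_finite_induct) (auto simp: ideal_zero ideal_add)

lemma ideal_prod: "is_ideal I \<Longrightarrow> finite S \<Longrightarrow> j \<in> S \<Longrightarrow> f j \<in> I \<Longrightarrow> prod f S \<in> I"
  by (simp add: prod.remove ideal_mult_right)

lemma is_ideal_colon: "is_ideal I \<Longrightarrow> is_ideal {f. l * f \<in> I}"
  unfolding is_ideal_def by (auto simp: distrib_left) (metis mult.left_commute)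

lemma ideal_power_diff:
  assumes "is_ideal I" "a - b \<in> I"
  shows "a ^ k - b ^ k \<in> I"
proof (cases k)
  case (Suc j)
  then show ?thesis
    using assms by (simp only: diff_power_eq_sum) (rule ideal_mult_right)
qed (simp add: assms ideal_zero)

lemma ideal_monomial_diff:
  assumes I: "is_ideal I" and "x - x' \<in> I" "y - y' \<in> I"
  shows "x ^ i * y ^ j - x' ^ i * y' ^ j \<in> I"
proof -
  have "x ^ i * y ^ j - x' ^ i * y' ^ j = x ^ i * (y ^ j - y' ^ j) + (x ^ i - x' ^ i) * y' ^ j"
    by (simp add: algebra_simps)
  also have "\<dots> \<in> I"
    using assms by (intro ideal_add ideal_mult_left ideal_mult_right ideal_power_diff)
  finally show ?thesis .
qed

lemma qdiff_power_diff_in_ideal: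
  assumes "is_ideal I" "x - x' \<in> I" "y - y' \<in> I"
  shows "qdiff_power n x y - qdiff_power n x' y' \<in> I"
proof -
  have "qdiff_power n x y - qdiff_power n x' y'
      = (\<Sum>t\<le>n. qconst ((-1) ^ t * qbinom (int n) t) * (x ^ (n - t) * y ^ t - x' ^ (n - t) * y' ^ t))"
    unfolding qdiff_power_def sum_subtractf[symmetric] by (rule sum.cong) (simp_all add: algebra_simps)
  also have "\<dots> \<in> I"
    using assms by (intro ideal_sum ideal_mult_left ideal_monomial_diff)
  finally show ?thesis .
qed

lemma qdiff_power_ideal_cong:
  assumes "is_ideal I" "x - x' \<in> I" "y - y' \<in> I"
  shows "qdiff_power n x y \<in> I \<longleftrightarrow> qdiff_power n x' y' \<in> I"
proof -
  have "qdiff_power n x y - qdiff_power n x' y' \<in> I"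
    using assms by (rule qdiff_power_diff_in_ideal)
  then show ?thesis
    using ideal_diff[OF assms(1)] ideal_add[OF assms(1)] by force
qed

text \<open>Induction on s + u: write x - q^(s+u) z = (x - q^s y) + q^s (y - q^u z) and treat each
  summand in the colon ideal of its linear form, where peeling that form off one hypothesis by
  qdiff_power_Suc leaves an instance of the induction hypothesis.\<close>
lemma qdiff_power_ideal_trans:
  fixes x y z :: "'b::comm_monoid_add \<Rightarrow>\<^sub>0 qfield"
  assumes "is_ideal I" "qdiff_power (Suc s) x y \<in> I" "qdiff_power (Suc u) y z \<in> I"
  shows "qdiff_power (Suc (s + u)) x z \<in> I"
  using assms
proof (induction "s + u" arbitrary: s u x y z I rule: less_induct)
  case less
  consider "s = 0" | "u = 0" | s' u' where "s = Suc s'" "u = Suc u'"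
    by (cases s; cases u) auto
  then show ?case
  proof cases
    case 1
    with less.prems show ?thesis
      using qdiff_power_ideal_cong[of I x y z z] by (simp add: ideal_zero)
  next
    case 2
    with less.prems show ?thesis
      using qdiff_power_ideal_cong[of I x x y z] by (simp add: ideal_zero)
  next
    case 3
    define c :: "'b \<Rightarrow>\<^sub>0 qfield" where "c = qconst (inverse qvar)"
    define l1 where "l1 = x - qconst (qvar ^ s) * y"
    define l2 where "l2 = y - qconst (qvar ^ u) * z"
    let ?P = "qdiff_power (s + u) x (c * z)"
    have I: "is_ideal I" by fact
    have "l1 * qdiff_power s x (c * y) \<in> I"
      using less.prems(2) by (simp add: l1_def c_def qdiff_power_Suc)
    moreover have "l1 * qdiff_power (Suc u) (c * y) (c * z) \<in> I"
      using less.prems(3) I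
      by (simp add: c_def qdiff_power_homogeneous ideal_mult_left)
    ultimately have "qdiff_power (Suc (s' + u)) x (c * z) \<in> {f. l1 * f \<in> I}"
      using 3 I by (intro less.hyps is_ideal_colon) auto
    then have P1: "l1 * ?P \<in> I"
      using 3 by simp
    have "l2 * qdiff_power (Suc s) x y \<in> I"
      using less.prems(2) I by (simp add: ideal_mult_left)
    moreover have "l2 * qdiff_power u y (c * z) \<in> I"
      using less.prems(3) by (simp add: l2_def c_def qdiff_power_Suc)
    ultimately have "qdiff_power (Suc (s + u')) x (c * z) \<in> {f. l2 * f \<in> I}"
      using 3 I by (intro less.hyps is_ideal_colon) auto
    then have P2: "l2 * ?P \<in> I"
      using 3 by simp
    have "x - qconst (qvar ^ (s + u)) * z = l1 + qconst (qvar ^ s) * l2"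
      by (simp add: l1_def l2_def power_add qconst_mult algebra_simps)
    then have "qdiff_power (Suc (s + u)) x z = (l1 + qconst (qvar ^ s) * l2) * ?P"
      by (simp add: qdiff_power_Suc c_def)
    also have "\<dots> = l1 * ?P + qconst (qvar ^ s) * (l2 * ?P)"
      by (simp add: algebra_simps)
    also have "\<dots> \<in> I"
      by (rule ideal_add[OF I P1 ideal_mult_left[OF I P2]])
    finally show ?thesis .
  qed
qed

lemma qdiff_power_chain:
  fixes X :: "nat \<Rightarrow> 'b::comm_monoid_add \<Rightarrow>\<^sub>0 qfield"
  assumes I: "is_ideal I" and "r \<ge> 1" and "1 \<le> j"
    and special: "\<And>k. k \<in> B \<Longrightarrow> 1 \<le> k \<Longrightarrow> k < j \<Longrightarrow> qdiff_power r (X k) (X (Suc k)) \<in> I"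
    and plain: "\<And>k. k \<notin> B \<Longrightarrow> 1 \<le> k \<Longrightarrow> k < j \<Longrightarrow> X k - X (Suc k) \<in> I"
  shows "qdiff_power (Suc (card (B \<inter> {1..<j}) * (r - 1))) (X 1) (X j) \<in> I"
  using \<open>1 \<le> j\<close>
proof (induction j rule: dec_induct)
  case base
  then show ?case
    by (simp add: I ideal_zero)
next
  case (step k)
  show ?case
  proof (cases "k \<in> B")
    case True
    then have "card (B \<inter> {1..<Suc k}) = Suc (card (B \<inter> {1..<k}))"
      using step.hyps by (simp add: atLeastLessThanSuc Int_insert_right)
    moreover have "qdiff_power (Suc (r - 1)) (X k) (X (Suc k)) \<in> I"
      using special True step.hyps \<open>r \<ge> 1\<close> by simp
    ultimately show ?thesis
      using qdiff_power_ideal_trans[OF I step.IH] by (simp add: add.commute)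
  next
    case False
    then have "B \<inter> {1..<Suc k} = B \<inter> {1..<k}"
      using step.hyps by (auto simp: atLeastLessThanSuc)
    moreover have "X k - X (Suc k) \<in> I"
      using plain False step.hyps by simp
    ultimately show ?thesis
      using qdiff_power_ideal_trans[OF I step.IH, where u = 0] by simp
  qed
qed

section \<open>V as a quotient of a polynomial ring\<close>

lemma mat_eq_add_iff: "b = v + a \<longleftrightarrow> v \<le> b \<and> a = b - v" for a b v :: mat
  by (auto simp: fun_eq_iff le_fun_def)

lemma valid_mat_add: "valid_mat m n a \<Longrightarrow> valid_mat m n v \<Longrightarrow> valid_mat m n (a + v)"
  by (simp add: valid_mat_def)

lemma valid_mat_diff: "valid_mat m n b \<Longrightarrow> valid_mat m n (b - v)"
  by (simp add: valid_mat_def)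

lemma valid_mat_diff_iff:
  assumes "valid_mat m n v" "v \<le> b"
  shows "valid_mat m n (b - v) \<longleftrightarrow> valid_mat m n b"
proof
  assume "valid_mat m n (b - v)"
  moreover have "b = (b - v) + v"
    using assms(2) by (auto simp: fun_eq_iff le_fun_def)
  ultimately show "valid_mat m n b"
    using assms(1) by (metis valid_mat_add)
qed (rule valid_mat_diff)

lemma valid_mat_le: "valid_mat m n b \<Longrightarrow> v \<le> b \<Longrightarrow> valid_mat m n v"
  unfolding valid_mat_def le_fun_def by (metis le_zero_eq)

lemma shift_mat_add: "t \<le> a i k \<Longrightarrow> shift_mat a i k t + v = shift_mat (a + v) i k t"
  by (auto simp: shift_mat_def fun_eq_iff)

lemma sum_fun_apply: "sum f S x = (\<Sum>a\<in>S. f a x)"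
  by (induct S rule: infinite_finite_induct) auto

definition shift_comb :: "mat \<Rightarrow> comb \<Rightarrow> comb" where
  "shift_comb v f = (\<lambda>b. if v \<le> b then f (b - v) else 0)"

lemma shift_comb_basis_vec: "shift_comb v (basis_vec a) = basis_vec (a + v)"
  unfolding shift_comb_def basis_vec_def by (auto simp: add.commute[of a] mat_eq_add_iff)

lemma shift_comb_add: "shift_comb v (f + g) = shift_comb v f + shift_comb v g"
  and shift_comb_diff: "shift_comb v (f - g) = shift_comb v f - shift_comb v g"
  and shift_comb_scale: "shift_comb v (scale_comb c f) = scale_comb c (shift_comb v f)"
  by (auto simp: shift_comb_def scale_comb_def fun_eq_iff)

lemma shift_comb_sum: "shift_comb v (sum f S) = (\<Sum>t\<in>S. shift_comb v (f t))"
  by (simp add: shift_comb_def sum_fun_apply fun_eq_iff)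

lemma rel_space_shift_comb:
  assumes "f \<in> rel_space r m n A" "valid_mat m n v"
  shows "shift_comb v f \<in> rel_space r m n A"
  using assms(1)
proof induct
  case (gen_A a i k)
  have "shift_mat a i k t + v = shift_mat (a + v) i k t" if "t \<le> r" for t
    using that gen_A.hyps(5) by (intro shift_mat_add) simp
  then have "(\<Sum>t = 1..r. shift_comb v (scale_comb ((-1) ^ (t - 1) * qbinom (int r) t)
                                   (basis_vec (shift_mat a i k t))))
     = (\<Sum>t = 1..r. scale_comb ((-1) ^ (t - 1) * qbinom (int r) t)
                                   (basis_vec (shift_mat (a + v) i k t)))"
    by (intro sum.cong) (simp_all add: shift_comb_scale shift_comb_basis_vec)
  then have "shift_comb v (basis_vec a - (\<Sum>t = 1..r. scale_comb ((-1) ^ (t - 1) * qbinom (int r) t)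
                                   (basis_vec (shift_mat a i k t))))
     = basis_vec (a + v) - (\<Sum>t = 1..r. scale_comb ((-1) ^ (t - 1) * qbinom (int r) t)
                                   (basis_vec (shift_mat (a + v) i k t)))"
    by (simp add: shift_comb_diff shift_comb_sum shift_comb_basis_vec)
  also have "\<dots> \<in> rel_space r m n A"
    using gen_A assms(2) by (intro rel_space.gen_A) (auto simp: valid_mat_add)
  finally show ?case .
next
  case (gen_notA a i k)
  then have "shift_comb v (basis_vec a - basis_vec (shift_mat a i k 1))
     = basis_vec (a + v) - basis_vec (shift_mat (a + v) i k 1)"
    by (simp add: shift_comb_diff shift_comb_basis_vec shift_mat_add)
  also have "\<dots> \<in> rel_space r m n A"
    using gen_notA assms(2) by (intro rel_space.gen_notA) (auto simp: valid_mat_add)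
  finally show ?case .
next
  case zero
  then show ?case
    using rel_space.zero by (simp add: shift_comb_def)
next
  case (add f g)
  then show ?case
    by (simp only: shift_comb_add rel_space.add)
next
  case (scale f c)
  then show ?case
    by (simp only: shift_comb_scale rel_space.scale)
qed

lemma rel_space_sum: "(\<And>t. t \<in> S \<Longrightarrow> f t \<in> rel_space r m n A) \<Longrightarrow> sum f S \<in> rel_space r m n A"
  by (induct S rule: infinite_finite_induct)
    (auto intro: rel_space.add rel_space.zero[folded zero_fun_def])

lemma lookup_single_mult:
  fixes p :: "mat \<Rightarrow>\<^sub>0 qfield"
  shows "Poly_Mapping.lookup (Poly_Mapping.single v c * p) b
    = (if v \<le> b then c * Poly_Mapping.lookup p (b - v) else 0)"
proof -
  have "Poly_Mapping.lookup (Poly_Mapping.single v c * p) b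
      = c * Sum_any (\<lambda>a. Poly_Mapping.lookup p a when b = v + a)"
    by (simp add: lookup_mult lookup_single when_mult)
  also have "(\<lambda>a. Poly_Mapping.lookup p a when b = v + a)
      = (\<lambda>a. (Poly_Mapping.lookup p a when a = b - v) when v \<le> b)"
    by (rule ext) (simp add: mat_eq_add_iff when_def)
  finally show ?thesis
    by (cases "v \<le> b") (simp_all add: Sum_any_when_equal)
qed

definition to_comb :: "nat \<Rightarrow> nat \<Rightarrow> (mat \<Rightarrow>\<^sub>0 qfield) \<Rightarrow> comb" where
  "to_comb m n p = (\<lambda>b. if valid_mat m n b then Poly_Mapping.lookup p b else 0)"

lemma to_comb_zero: "to_comb m n 0 = 0"
  and to_comb_add: "to_comb m n (p + p') = to_comb m n p + to_comb m n p'"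
  and to_comb_diff: "to_comb m n (p - p') = to_comb m n p - to_comb m n p'"
  by (auto simp: to_comb_def fun_eq_iff lookup_add lookup_minus)

lemma to_comb_sum: "to_comb m n (sum f S) = (\<Sum>t\<in>S. to_comb m n (f t))"
  by (simp add: to_comb_def lookup_sum sum_fun_apply fun_eq_iff)

lemma to_comb_single: "valid_mat m n w \<Longrightarrow> to_comb m n (Poly_Mapping.single w c) = scale_comb c (basis_vec w)"
  by (rule ext) (auto simp: to_comb_def scale_comb_def basis_vec_def lookup_single when_def)

lemma to_comb_single_mult:
  "to_comb m n (Poly_Mapping.single v c * p)
    = (if valid_mat m n v then scale_comb c (shift_comb v (to_comb m n p)) else 0)"
  by (auto simp: fun_eq_iff to_comb_def shift_comb_def scale_comb_def lookup_single_mult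
      valid_mat_diff_iff dest: valid_mat_le)

lemma sum_single_lookup: "p = (\<Sum>v\<in>Poly_Mapping.keys p. Poly_Mapping.single v (Poly_Mapping.lookup p v))"
  by (rule poly_mapping_eqI)
    (auto simp: lookup_sum lookup_single when_def in_keys_iff sum.delta' cong: if_cong)

definition rel_ideal :: "nat \<Rightarrow> nat \<Rightarrow> nat \<Rightarrow> (nat \<Rightarrow> nat set) \<Rightarrow> (mat \<Rightarrow>\<^sub>0 qfield) set" where
  "rel_ideal r m n A = {p. to_comb m n p \<in> rel_space r m n A}"

lemma is_ideal_rel_ideal: "is_ideal (rel_ideal r m n A)"
  unfolding is_ideal_def rel_ideal_def
proof (intro conjI ballI allI; clarsimp)
  show "to_comb m n 0 \<in> rel_space r m n A"
    using rel_space.zero by (simp add: to_comb_zero zero_fun_def)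
next
  fix p p'
  assume "to_comb m n p \<in> rel_space r m n A" "to_comb m n p' \<in> rel_space r m n A"
  then show "to_comb m n (p + p') \<in> rel_space r m n A"
    by (simp add: to_comb_add rel_space.add)
next
  fix p c
  assume p: "to_comb m n p \<in> rel_space r m n A"
  have "c * p = (\<Sum>v\<in>Poly_Mapping.keys c. Poly_Mapping.single v (Poly_Mapping.lookup c v) * p)"
    by (subst sum_single_lookup[of c]) (simp add: sum_distrib_right)
  then have "to_comb m n (c * p)
      = (\<Sum>v\<in>Poly_Mapping.keys c. to_comb m n (Poly_Mapping.single v (Poly_Mapping.lookup c v) * p))"
    by (simp add: to_comb_sum)
  also have "\<dots> \<in> rel_space r m n A"
    using p rel_space.zero
    by (intro rel_space_sum) (auto simp: to_comb_single_mult zero_fun_def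
        intro: rel_space.scale rel_space_shift_comb)
  finally show "to_comb m n (c * p) \<in> rel_space r m n A" .
qed

section \<open>The defining relations as polynomials\<close>

definition entry_mat :: "nat \<Rightarrow> nat \<Rightarrow> nat \<Rightarrow> mat" where
  "entry_mat i k p = (\<lambda>i' k'. if i' = i \<and> k' = k then p else 0)"

definition xvar :: "nat \<Rightarrow> nat \<Rightarrow> mat \<Rightarrow>\<^sub>0 qfield" where
  "xvar i k = Poly_Mapping.single (entry_mat i k 1) 1"

lemma valid_entry_mat: "i \<in> {1..m} \<Longrightarrow> k \<in> {1..n} \<Longrightarrow> valid_mat m n (entry_mat i k p)"
  by (auto simp: valid_mat_def entry_mat_def)

lemma xvar_power: "xvar i k ^ p = Poly_Mapping.single (entry_mat i k p) 1"
proof (induct p)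
  case 0
  have "entry_mat i k 0 = 0"
    by (simp add: entry_mat_def fun_eq_iff)
  then show ?case
    by (simp only: power_0 single_one)
next
  case (Suc p)
  have "entry_mat i k 1 + entry_mat i k p = entry_mat i k (Suc p)"
    by (simp add: entry_mat_def fun_eq_iff)
  with Suc show ?case
    by (simp add: xvar_def mult_single)
qed

lemma qconst_mult_xvar_powers:
  "qconst c * xvar i k ^ a * xvar i' k' ^ b = Poly_Mapping.single (entry_mat i k a + entry_mat i' k' b) c"
  by (simp add: qconst_def xvar_power mult_single)

lemma scale_comb_1: "scale_comb 1 f = f"
  and scale_comb_minus: "scale_comb (- c) f = - scale_comb c f"
  by (simp_all add: scale_comb_def fun_eq_iff)

lemma qdiff_power_xvar_in_rel_ideal:
  assumes "i \<in> {1..m}" "k \<in> {1..n-1}" "k \<in> A i"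
  shows "qdiff_power r (xvar i k) (xvar i (Suc k)) \<in> rel_ideal r m n A"
proof -
  define a where "a = entry_mat i k r"
  define rel_term where "rel_term t = scale_comb ((-1) ^ (t - 1) * qbinom (int r) t) (basis_vec (shift_mat a i k t))" for t
  have shifted: "shift_mat a i k t = entry_mat i k (r - t) + entry_mat i (Suc k) t" for t
    by (auto simp: shift_mat_def a_def entry_mat_def fun_eq_iff)
  have valid: "valid_mat m n (entry_mat i k p + entry_mat i (Suc k) p')" for p p'
    using assms by (intro valid_mat_add valid_entry_mat) auto
  have "to_comb m n (qdiff_power r (xvar i k) (xvar i (Suc k)))
      = (\<Sum>t\<le>r. scale_comb ((-1) ^ t * qbinom (int r) t) (basis_vec (shift_mat a i k t)))"
    unfolding qdiff_power_def to_comb_sum qconst_mult_xvar_powers shifted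
    by (simp add: to_comb_single valid)
  also have "\<dots> = scale_comb 1 (basis_vec (shift_mat a i k 0)) + (\<Sum>t = 1..r. - rel_term t)"
  proof -
    have "(\<Sum>t = 1..r. scale_comb ((-1) ^ t * qbinom (int r) t) (basis_vec (shift_mat a i k t)))
        = (\<Sum>t = 1..r. - rel_term t)"
    proof (rule sum.cong)
      fix t
      assume "t \<in> {1..r}"
      then have "(-1 :: qfield) ^ t = - ((-1) ^ (t - 1))"
        by (cases t) auto
      then show "scale_comb ((-1) ^ t * qbinom (int r) t) (basis_vec (shift_mat a i k t)) = - rel_term t"
        by (simp add: rel_term_def flip: scale_comb_minus)
    qed simp
    moreover have "{..r} = insert 0 {1..r}"
      by auto
    ultimately show ?thesis
      by simp
  qed
  also have "\<dots> = basis_vec a - (\<Sum>t = 1..r. rel_term t)"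
    by (simp add: scale_comb_1 sum_negf shift_mat_def a_def)
  also have "\<dots> \<in> rel_space r m n A"
    unfolding rel_term_def a_def
    using assms by (intro rel_space.gen_A valid_entry_mat) (auto simp: entry_mat_def)
  finally show ?thesis
    by (simp add: rel_ideal_def)
qed

lemma xvar_diff_in_rel_ideal:
  assumes "i \<in> {1..m}" "k \<in> {1..n-1}" "k \<notin> A i"
  shows "xvar i k - xvar i (Suc k) \<in> rel_ideal r m n A"
proof -
  have "shift_mat (entry_mat i k 1) i k 1 = entry_mat i (Suc k) 1"
    by (auto simp: shift_mat_def entry_mat_def fun_eq_iff)
  moreover have "valid_mat m n (entry_mat i k 1)" "valid_mat m n (entry_mat i (Suc k) 1)"
    using assms by (auto intro: valid_entry_mat)
  ultimately have "to_comb m n (xvar i k - xvar i (Suc k))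
      = basis_vec (entry_mat i k 1) - basis_vec (shift_mat (entry_mat i k 1) i k 1)"
    by (simp add: xvar_def to_comb_diff to_comb_single scale_comb_1)
  also have "\<dots> \<in> rel_space r m n A"
    using assms by (intro rel_space.gen_notA valid_entry_mat) (auto simp: entry_mat_def)
  finally show ?thesis
    by (simp add: rel_ideal_def)
qed

lemma qdiff_power_row_in_rel_ideal:
  assumes "r \<ge> 1" "n \<ge> 1" "i \<in> {1..m}" "A i \<subseteq> {1..n-1}"
  shows "qdiff_power (Suc (card (A i) * (r - 1))) (xvar i 1) (xvar i n) \<in> rel_ideal r m n A"
proof -
  have "qdiff_power (Suc (card (A i \<inter> {1..<n}) * (r - 1))) (xvar i 1) (xvar i n) \<in> rel_ideal r m n A"
    using assms by (intro qdiff_power_chain is_ideal_rel_ideal qdiff_power_xvar_in_rel_ideal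
        xvar_diff_in_rel_ideal) auto
  moreover have "A i \<inter> {1..<n} = A i"
    using assms(2,4) by (fastforce simp: subset_iff)
  ultimately show ?thesis
    by simp
qed

lemma prod_single:
  "(\<Prod>i\<in>S. Poly_Mapping.single (w i) (d i) :: 'b::comm_monoid_add \<Rightarrow>\<^sub>0 'c::comm_semiring_1)
    = Poly_Mapping.single (\<Sum>i\<in>S. w i) (\<Prod>i\<in>S. d i)"
  by (induct S rule: infinite_finite_induct) (simp_all add: mult_single)

lemma sum_entry_mat_eq_edge_mat:
  assumes "n \<noteq> 1"
  shows "(\<Sum>i\<in>{1..m}. entry_mat i n (L - kk i) + entry_mat i 1 (kk i)) = edge_mat m n L kk"
  using assms by (auto simp: fun_eq_iff sum_fun_apply entry_mat_def edge_mat_def)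

lemma to_comb_prod_qdiff_power:
  assumes "n \<ge> 2"
  shows "to_comb m n (\<Prod>i\<in>{1..m}. qdiff_power L (xvar i n) (xvar i 1))
    = (\<Sum>kk \<in> PiE {1..m} (\<lambda>_. {0..L}).
         scale_comb ((-1) ^ (\<Sum>i = 1..m. kk i) * (\<Prod>i = 1..m. qbinom (int L) (kk i)))
                    (basis_vec (edge_mat m n L kk)))"
proof -
  define c where "c t = (-1) ^ t * qbinom (int L) t" for t
  have "qdiff_power L (xvar i n) (xvar i 1)
      = (\<Sum>t\<in>{0..L}. Poly_Mapping.single (entry_mat i n (L - t) + entry_mat i 1 t) (c t))" for i
    by (simp add: qdiff_power_def qconst_mult_xvar_powers atMost_atLeast0 c_def)
  then have "(\<Prod>i\<in>{1..m}. qdiff_power L (xvar i n) (xvar i 1))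
      = (\<Sum>kk\<in>PiE {1..m} (\<lambda>_. {0..L}).
           \<Prod>i\<in>{1..m}. Poly_Mapping.single (entry_mat i n (L - kk i) + entry_mat i 1 (kk i)) (c (kk i)))"
    by (simp add: prod_sum_PiE)
  also have "\<dots> = (\<Sum>kk\<in>PiE {1..m} (\<lambda>_. {0..L}). Poly_Mapping.single (edge_mat m n L kk)
        ((-1) ^ (\<Sum>i = 1..m. kk i) * (\<Prod>i = 1..m. qbinom (int L) (kk i))))"
    using assms by (intro sum.cong refl) (simp only: prod_single sum_entry_mat_eq_edge_mat,
        simp add: c_def prod.distrib power_sum)
  finally show ?thesis
    using assms by (simp add: to_comb_sum to_comb_single valid_mat_def edge_mat_def)
qed

theorem proposition5p18:
  fixes r m n N :: nat and A :: "nat \<Rightarrow> nat set"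
  assumes "r \<ge> 2" "m \<ge> 1" "n \<ge> 2" "1 \<le> N" "N \<le> n"
    and "\<And>i. i \<in> {1..m} \<Longrightarrow> A i \<subseteq> {1..n-1} \<and> card (A i) = N - 1"
  shows "zero_in_V r m n A
     (let L = (N - 1) * (r - 1) + 1 in
      \<Sum>kk \<in> PiE {1..m} (\<lambda>_. {0..L}).
         scale_comb ((-1) ^ (\<Sum>i = 1..m. kk i) * (\<Prod>i = 1..m. qbinom (int L) (kk i)))
                    (basis_vec (edge_mat m n L kk)))"
proof -
  define L where "L = (N - 1) * (r - 1) + 1"
  have row: "A 1 \<subseteq> {1..n-1}" "card (A 1) = N - 1"
    using assms(2) assms(6)[of 1] by auto
  then have "qdiff_power (Suc (card (A 1) * (r - 1))) (xvar 1 1) (xvar 1 n) \<in> rel_ideal r m n A"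
    using assms by (intro qdiff_power_row_in_rel_ideal) auto
  then have "qdiff_power L (xvar 1 1) (xvar 1 n) \<in> rel_ideal r m n A"
    using row by (simp add: L_def)
  then have "qdiff_power L (xvar 1 n) (xvar 1 1) \<in> rel_ideal r m n A"
    unfolding qdiff_power_swap[of L "xvar 1 n"] by (rule ideal_mult_left[OF is_ideal_rel_ideal])
  then have "(\<Prod>i\<in>{1..m}. qdiff_power L (xvar i n) (xvar i 1)) \<in> rel_ideal r m n A"
    using assms(2) by (intro ideal_prod is_ideal_rel_ideal) auto
  then have "to_comb m n (\<Prod>i\<in>{1..m}. qdiff_power L (xvar i n) (xvar i 1)) \<in> rel_space r m n A"
    by (simp add: rel_ideal_def)
  then show ?thesis
    unfolding zero_in_V_def Let_def L_def[symmetric] to_comb_prod_qdiff_power[OF assms(3)] .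
qed

end
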